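(* Let $n\ge 2k\ge 2$ and $i\in\{0,1,\ldots,k-1\}$. If the generalized Johnson graph $J(n,k,i)$ admits perfect state transfer, then $n=2k$.
   Context: For integers $n\ge 2k$ and $0\le i\le k$, $J(n,k,i)$ is the graph whose vertices are the $k$-subsets of $\{1,\ldots,n\}$, with $A\sim B$ iff $|A\cap B|=i$. For a simple graph $X$ with adjacency matrix $A$, let $\mathcal{H}_X(t)=e^{itA}$. $X$ admits perfect state transfer (PST) from a vertex $u$ to a vertex $v\neq u$ at time $\tau>0$ if $|\mathcal{H}_X(\tau)_{u,v}|=1$; $X$ admits PST if this happens for some $u\ne v$ and some $\tau>0$. *)

theory Defs
  imports Complex_Main
begin

definition adjacency_matrix :: "('a \<Rightarrow> 'a \<Rightarrow> bool) \<Rightarrow> 'a \<Rightarrow> 'a \<Rightarrow> complex" where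
  "adjacency_matrix E u v = (if E u v then 1 else 0)"

fun mat_pow :: "'a set \<Rightarrow> ('a \<Rightarrow> 'a \<Rightarrow> complex) \<Rightarrow> nat \<Rightarrow> 'a \<Rightarrow> 'a \<Rightarrow> complex" where
  "mat_pow V M 0 u v = (if u = v then 1 else 0)"
| "mat_pow V M (Suc m) u v = (\<Sum>w\<in>V. M u w * mat_pow V M m w v)"

text \<open>The transition matrix H_X(t) = exp(i t A), via the exponential power series.\<close>
definition transition_matrix :: "'a set \<Rightarrow> ('a \<Rightarrow> 'a \<Rightarrow> bool) \<Rightarrow> real \<Rightarrow> 'a \<Rightarrow> 'a \<Rightarrow> complex" where
  "transition_matrix V E t u v =
     (\<Sum>m. (\<i> * complex_of_real t) ^ m / fact m * mat_pow V (adjacency_matrix E) m u v)"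

definition has_PST :: "'a set \<Rightarrow> ('a \<Rightarrow> 'a \<Rightarrow> bool) \<Rightarrow> bool" where
  "has_PST V E \<longleftrightarrow>
     (\<exists>u\<in>V. \<exists>v\<in>V. u \<noteq> v \<and> (\<exists>\<tau>::real. \<tau> > 0 \<and> cmod (transition_matrix V E \<tau> u v) = 1))"

definition johnson_vertices :: "nat \<Rightarrow> nat \<Rightarrow> nat set set" where
  "johnson_vertices n k = {A. A \<subseteq> {1..n} \<and> card A = k}"

definition johnson_adj :: "nat \<Rightarrow> nat \<Rightarrow> nat \<Rightarrow> nat set \<Rightarrow> nat set \<Rightarrow> bool" where
  "johnson_adj n k i A B \<longleftrightarrow>
     A \<in> johnson_vertices n k \<and> B \<in> johnson_vertices n k \<and> A \<noteq> B \<and> card (A \<inter> B) = i"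

end

theory Submission
  imports Defs "HOL-Combinatorics.Transposition"
begin

text \<open>The transition matrix of a graph is unitary, so every row of it is a unit vector, and it
  commutes with every automorphism. If an automorphism fixes \<open>u\<close> but moves \<open>v\<close> to \<open>v' \<noteq> v\<close>,
  then the entries at \<open>(u, v)\<close> and \<open>(u, v')\<close> coincide and share the unit mass of row \<open>u\<close>,
  so each has squared modulus at most \<open>1/2\<close>. For \<open>n > 2k\<close> and distinct \<open>k\<close>-sets \<open>A\<close>, \<open>B\<close>, such an automorphism
  of \<open>J(n,k,i)\<close> is induced by the transposition of a point of \<open>B - A\<close> with a point outside
  \<open>A \<union> B\<close>.\<close>

lemma mat_pow_add:
  assumes "finite V" "u \<in> V"
  shows "mat_pow V M (a + b) u v = (\<Sum>w\<in>V. mat_pow V M a u w * mat_pow V M b w v)"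
  using assms(2)
proof (induction a arbitrary: u)
  case 0
  then show ?case
    using assms(1) by (simp add: if_distrib[where f = "\<lambda>x. x * _"] cong: if_cong)
next
  case (Suc a)
  have "mat_pow V M (Suc a + b) u v = (\<Sum>x\<in>V. M u x * (\<Sum>w\<in>V. mat_pow V M a x w * mat_pow V M b w v))"
    using Suc.IH by simp
  also have "\<dots> = (\<Sum>w\<in>V. \<Sum>x\<in>V. M u x * mat_pow V M a x w * mat_pow V M b w v)"
    by (subst sum.swap) (simp add: sum_distrib_left mult.assoc)
  also have "\<dots> = (\<Sum>w\<in>V. mat_pow V M (Suc a) u w * mat_pow V M b w v)"
    by (simp add: sum_distrib_right)
  finally show ?case .
qed

lemma mat_pow_one:
  assumes "finite V" "v \<in> V"
  shows "mat_pow V M 1 u v = M u v"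
  using assms by (simp add: mult.commute[of "M _ _"] if_distrib[of "\<lambda>x. x * _"] cong: if_cong)

lemma mat_pow_sym:
  assumes "finite V" and sym: "\<forall>x\<in>V. \<forall>y\<in>V. M x y = M y x" and "u \<in> V" "v \<in> V"
  shows "mat_pow V M m u v = mat_pow V M m v u"
  using assms(3,4)
proof (induction m arbitrary: u v)
  case (Suc m)
  have "mat_pow V M (m + 1) v u = (\<Sum>w\<in>V. mat_pow V M m v w * mat_pow V M 1 w u)"
    using mat_pow_add[OF assms(1) Suc.prems(2)] .
  also have "\<dots> = (\<Sum>w\<in>V. M u w * mat_pow V M m w v)"
    using Suc sym mat_pow_one[OF assms(1) Suc.prems(1)] by (intro sum.cong) (simp_all add: mult.commute)
  finally show ?case by simp
qed simp

lemma mat_pow_real: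
  assumes "\<forall>x y. cnj (M x y) = M x y"
  shows "cnj (mat_pow V M m u v) = mat_pow V M m u v"
  by (induction m arbitrary: u v) (simp_all add: assms)

lemma mat_pow_norm_le:
  assumes "\<forall>x y. norm (M x y) \<le> C"
  shows "norm (mat_pow V M m u v) \<le> (real (card V) * C) ^ m"
proof (induction m arbitrary: u v)
  case (Suc m)
  have "0 \<le> C" using assms norm_ge_zero order_trans by blast
  have "norm (mat_pow V M (Suc m) u v) \<le> (\<Sum>w\<in>V. norm (M u w) * norm (mat_pow V M m w v))"
    by (simp add: sum_norm_le norm_mult)
  also have "\<dots> \<le> (\<Sum>w\<in>V. C * (real (card V) * C) ^ m)"
    using assms Suc.IH \<open>0 \<le> C\<close> by (intro sum_mono mult_mono) auto
  finally show ?case by simp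
qed simp

lemma mat_pow_automorphism:
  assumes bij: "bij_betw \<sigma> V V" and inv: "\<forall>x\<in>V. \<forall>y\<in>V. M (\<sigma> x) (\<sigma> y) = M x y"
    and "u \<in> V" "v \<in> V"
  shows "mat_pow V M m (\<sigma> u) (\<sigma> v) = mat_pow V M m u v"
  using assms(3,4)
proof (induction m arbitrary: u v)
  case 0
  then show ?case using bij by (auto simp: bij_betw_def inj_on_def)
next
  case (Suc m)
  have "mat_pow V M (Suc m) (\<sigma> u) (\<sigma> v) = (\<Sum>w\<in>V. M (\<sigma> u) (\<sigma> w) * mat_pow V M m (\<sigma> w) (\<sigma> v))"
    using sum.reindex_bij_betw[OF bij, of "\<lambda>w. M (\<sigma> u) w * mat_pow V M m w (\<sigma> v)"] by simp
  also have "\<dots> = mat_pow V M (Suc m) u v"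
    using Suc inv by simp
  finally show ?case .
qed

definition transition_term :: "'a set \<Rightarrow> ('a \<Rightarrow> 'a \<Rightarrow> bool) \<Rightarrow> real \<Rightarrow> 'a \<Rightarrow> 'a \<Rightarrow> nat \<Rightarrow> complex" where
  "transition_term V E t u v m = (\<i> * complex_of_real t) ^ m / fact m * mat_pow V (adjacency_matrix E) m u v"

lemma summable_norm_transition_term: "summable (\<lambda>m. norm (transition_term V E t u v m))"
proof (rule summable_comparison_test)
  show "summable (\<lambda>m. inverse (fact m) * (\<bar>t\<bar> * real (card V)) ^ m)"
    by (rule summable_exp)
  show "\<exists>N. \<forall>m\<ge>N. norm (norm (transition_term V E t u v m)) \<le> inverse (fact m) * (\<bar>t\<bar> * real (card V)) ^ m"
  proof (intro exI allI impI)
    fix m :: nat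
    have "norm (norm (transition_term V E t u v m))
        = \<bar>t\<bar> ^ m / fact m * norm (mat_pow V (adjacency_matrix E) m u v)"
      by (simp add: transition_term_def norm_mult norm_divide norm_power)
    also have "\<dots> \<le> \<bar>t\<bar> ^ m / fact m * (real (card V) * 1) ^ m"
      by (intro mult_left_mono mat_pow_norm_le) (auto simp: adjacency_matrix_def)
    finally show "norm (norm (transition_term V E t u v m)) \<le> inverse (fact m) * (\<bar>t\<bar> * real (card V)) ^ m"
      by (simp add: power_mult_distrib divide_inverse mult_ac)
  qed
qed

lemma transition_term_sums: "transition_term V E t u v sums transition_matrix V E t u v"
  using summable_sums[OF summable_norm_cancel[OF summable_norm_transition_term]]
  unfolding transition_matrix_def transition_term_def[abs_def] .

lemma transition_matrix_zero: "transition_matrix V E 0 u v = (if u = v then 1 else 0)"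
proof -
  have "transition_term V E 0 u v = (\<lambda>m. if m = 0 then (if u = v then 1 else 0) else 0)"
    by (rule ext) (simp add: transition_term_def power_0_left)
  then have "transition_term V E 0 u v sums (if u = v then 1 else 0)"
    using sums_single[of 0 "\<lambda>_. if u = v then 1 else 0 :: complex"] by simp
  then show ?thesis
    by (rule sums_unique2[OF transition_term_sums])
qed

lemma transition_matrix_add:
  assumes "finite V" "u \<in> V"
  shows "(\<Sum>w\<in>V. transition_matrix V E s u w * transition_matrix V E t w v) = transition_matrix V E (s + t) u v"
proof -
  let ?T = "transition_term V E" and ?A = "adjacency_matrix E"
  define x y where "x = \<i> * complex_of_real s" and "y = \<i> * complex_of_real t"
  have "(\<lambda>k. \<Sum>w\<in>V. \<Sum>j\<le>k. ?T s u w j * ?T t w v (k - j))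
          sums (\<Sum>w\<in>V. transition_matrix V E s u w * transition_matrix V E t w v)"
    using Cauchy_product_sums[OF summable_norm_transition_term summable_norm_transition_term]
    by (intro sums_sum) (simp add: transition_term_sums[THEN sums_unique])
  moreover have "(\<Sum>w\<in>V. \<Sum>j\<le>k. ?T s u w j * ?T t w v (k - j)) = ?T (s + t) u v k" for k
  proof -
    have "(\<Sum>w\<in>V. \<Sum>j\<le>k. ?T s u w j * ?T t w v (k - j))
        = (\<Sum>j\<le>k. (x ^ j /\<^sub>R fact j) * (y ^ (k - j) /\<^sub>R fact (k - j))
                     * (\<Sum>w\<in>V. mat_pow V ?A j u w * mat_pow V ?A (k - j) w v))"
      by (subst sum.swap) (simp add: transition_term_def x_def y_def sum_distrib_left
          scaleR_conv_of_real divide_inverse mult_ac)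
    also have "\<dots> = (\<Sum>j\<le>k. (x ^ j /\<^sub>R fact j) * (y ^ (k - j) /\<^sub>R fact (k - j))) * mat_pow V ?A k u v"
      unfolding sum_distrib_right
    proof (intro sum.cong refl)
      fix j assume "j \<in> {..k}"
      then have "mat_pow V ?A k u v = (\<Sum>w\<in>V. mat_pow V ?A j u w * mat_pow V ?A (k - j) w v)"
        using mat_pow_add[OF assms, of ?A j "k - j" v] by simp
      then show "(x ^ j /\<^sub>R fact j) * (y ^ (k - j) /\<^sub>R fact (k - j))
            * (\<Sum>w\<in>V. mat_pow V ?A j u w * mat_pow V ?A (k - j) w v)
          = (x ^ j /\<^sub>R fact j) * (y ^ (k - j) /\<^sub>R fact (k - j)) * mat_pow V ?A k u v"
        by simp
    qed
    also have "\<dots> = (x + y) ^ k /\<^sub>R fact k * mat_pow V ?A k u v"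
      using exp_series_add_commuting[of x y k] by (simp add: mult.commute)
    also have "\<dots> = ?T (s + t) u v k"
      unfolding transition_term_def scaleR_conv_of_real
      by (simp add: x_def y_def distrib_left divide_inverse mult.commute)
    finally show ?thesis .
  qed
  ultimately show ?thesis
    by (simp add: sums_unique2[OF _ transition_term_sums])
qed

lemma cnj_transition_matrix:
  assumes "finite V" "\<forall>x\<in>V. \<forall>y\<in>V. E x y = E y x" "u \<in> V" "v \<in> V"
  shows "cnj (transition_matrix V E t u v) = transition_matrix V E (- t) v u"
proof -
  have "cnj (transition_term V E t u v m) = transition_term V E (- t) v u m" for m
    using mat_pow_real[of "adjacency_matrix E"] mat_pow_sym[of V "adjacency_matrix E"] assms
    by (simp add: transition_term_def adjacency_matrix_def)
  moreover have "(\<lambda>m. cnj (transition_term V E t u v m)) sums cnj (transition_matrix V E t u v)"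
    using sums_cnj[THEN iffD2, OF transition_term_sums] .
  ultimately have "transition_term V E (- t) v u sums cnj (transition_matrix V E t u v)"
    by simp
  then show ?thesis
    by (rule sums_unique2[OF _ transition_term_sums])
qed

lemma transition_matrix_row_norm:
  assumes "finite V" "\<forall>x\<in>V. \<forall>y\<in>V. E x y = E y x" "u \<in> V"
  shows "(\<Sum>w\<in>V. (cmod (transition_matrix V E t u w))\<^sup>2) = 1"
proof -
  have "complex_of_real (\<Sum>w\<in>V. (cmod (transition_matrix V E t u w))\<^sup>2)
      = (\<Sum>w\<in>V. transition_matrix V E t u w * cnj (transition_matrix V E t u w))"
    by (simp only: of_real_sum complex_norm_square)
  also have "\<dots> = (\<Sum>w\<in>V. transition_matrix V E t u w * transition_matrix V E (- t) w u)"
    using assms by (intro sum.cong) (simp_all add: cnj_transition_matrix)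
  also have "\<dots> = 1"
    using transition_matrix_add[OF assms(1,3), of E t "- t" u] by (simp add: transition_matrix_zero)
  finally show ?thesis
    using of_real_eq_1_iff by blast
qed

lemma transition_matrix_automorphism:
  assumes "bij_betw \<sigma> V V" "\<forall>x\<in>V. \<forall>y\<in>V. E (\<sigma> x) (\<sigma> y) = E x y" "u \<in> V" "v \<in> V"
  shows "transition_matrix V E t (\<sigma> u) (\<sigma> v) = transition_matrix V E t u v"
  using mat_pow_automorphism[of \<sigma> V "adjacency_matrix E"] assms
  by (simp add: transition_matrix_def adjacency_matrix_def)

lemma transition_matrix_sq_norm_le_half:
  assumes fin: "finite V" and sym: "\<forall>x\<in>V. \<forall>y\<in>V. E x y = E y x"
    and aut: "bij_betw \<sigma> V V" "\<forall>x\<in>V. \<forall>y\<in>V. E (\<sigma> x) (\<sigma> y) = E x y"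
    and "u \<in> V" "v \<in> V" "\<sigma> u = u" "\<sigma> v \<noteq> v"
  shows "(cmod (transition_matrix V E t u v))\<^sup>2 \<le> 1 / 2"
proof -
  let ?h = "\<lambda>w. (cmod (transition_matrix V E t u w))\<^sup>2"
  have "\<sigma> v \<in> V" using aut(1) \<open>v \<in> V\<close> by (auto simp: bij_betw_def)
  have "?h (\<sigma> v) = ?h v"
    using transition_matrix_automorphism[OF aut \<open>u \<in> V\<close> \<open>v \<in> V\<close>] \<open>\<sigma> u = u\<close> by simp
  then have "2 * ?h v = (\<Sum>w\<in>{v, \<sigma> v}. ?h w)"
    using \<open>\<sigma> v \<noteq> v\<close> by simp
  also have "\<dots> \<le> (\<Sum>w\<in>V. ?h w)"
    using fin \<open>v \<in> V\<close> \<open>\<sigma> v \<in> V\<close> by (intro sum_mono2) auto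
  also have "\<dots> = 1"
    using transition_matrix_row_norm[OF fin sym \<open>u \<in> V\<close>] .
  finally show ?thesis by simp
qed

lemma finite_johnson_vertices: "finite (johnson_vertices n k)"
  unfolding johnson_vertices_def by (rule finite_subset[of _ "Pow {1..n}"]) auto

lemma johnson_adj_commute: "johnson_adj n k i A B = johnson_adj n k i B A"
  unfolding johnson_adj_def by (auto simp: Int_commute)

lemma image_in_johnson_vertices:
  assumes "bij_betw p {1..n} {1..n}" "X \<in> johnson_vertices n k"
  shows "p ` X \<in> johnson_vertices n k"
  using assms by (auto simp: johnson_vertices_def bij_betw_def card_image inj_on_subset)

lemma bij_betw_image_johnson_vertices:
  assumes p: "bij_betw p {1..n} {1..n}"
  shows "bij_betw ((`) p) (johnson_vertices n k) (johnson_vertices n k)"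
proof (rule bij_betw_byWitness[where f' = "(`) (inv_into {1..n} p)"])
  have sub: "X \<subseteq> {1..n}" if "X \<in> johnson_vertices n k" for X
    using that by (simp add: johnson_vertices_def)
  show "\<forall>X\<in>johnson_vertices n k. inv_into {1..n} p ` p ` X = X"
    using p sub by (simp add: bij_betw_def)
  show "\<forall>X\<in>johnson_vertices n k. p ` inv_into {1..n} p ` X = X"
    using p sub by (simp add: bij_betw_def image_inv_into_cancel)
  show "(`) p ` johnson_vertices n k \<subseteq> johnson_vertices n k"
    using image_in_johnson_vertices[OF p] by blast
  show "(`) (inv_into {1..n} p) ` johnson_vertices n k \<subseteq> johnson_vertices n k"
    using image_in_johnson_vertices[OF bij_betw_inv_into[OF p]] by blast
qed

lemma johnson_adj_image:
  assumes p: "bij_betw p {1..n} {1..n}"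
    and "X \<in> johnson_vertices n k" "Y \<in> johnson_vertices n k"
  shows "johnson_adj n k i (p ` X) (p ` Y) = johnson_adj n k i X Y"
proof -
  have inj: "inj_on p (X \<union> Y)"
    using p assms(2,3) by (auto simp: johnson_vertices_def bij_betw_def intro: inj_on_subset)
  then have "p ` X = p ` Y \<longleftrightarrow> X = Y"
    by (simp add: inj_on_image_eq_iff)
  moreover have "card (p ` X \<inter> p ` Y) = card (p ` (X \<inter> Y))"
    using inj by (simp add: inj_on_image_Int)
  moreover have "\<dots> = card (X \<inter> Y)"
    by (rule card_image, rule inj_on_subset[OF inj]) blast
  ultimately show ?thesis
    using assms by (simp add: johnson_adj_def image_in_johnson_vertices)
qed

lemma obtain_permutation_fixing_moving:
  assumes "2 * k < n" "A \<in> johnson_vertices n k" "B \<in> johnson_vertices n k" "A \<noteq> B"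
  obtains p where "bij_betw p {1..n} {1..n}" "p ` A = A" "p ` B \<noteq> B"
proof -
  have A: "A \<subseteq> {1..n}" "card A = k" "finite A" and B: "B \<subseteq> {1..n}" "card B = k" "finite B"
    using assms(2,3) by (auto simp: johnson_vertices_def finite_subset)
  obtain b where b: "b \<in> B" "b \<notin> A"
    using card_subset_eq[OF \<open>finite A\<close>] A B \<open>A \<noteq> B\<close> by (metis subsetI)
  have "card (A \<union> B) < card {1..n}"
    using card_Un_le[of A B] A B \<open>2 * k < n\<close> by simp
  then have "\<not> {1..n} \<subseteq> A \<union> B"
    using card_mono[OF finite_UnI[OF \<open>finite A\<close> \<open>finite B\<close>]] by (meson not_le)
  then obtain c where c: "c \<in> {1..n}" "c \<notin> A \<union> B"
    by blast
  let ?p = "Transposition.transpose b c"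
  have "bij_betw ?p {1..n} {1..n}"
    using b(1) B(1) c(1) by auto
  moreover have "?p ` A = A"
    using b c by (auto simp: transpose_def)
  moreover have "c \<in> ?p ` B"
    using b(1) by (metis imageI transpose_apply_first)
  ultimately show thesis
    using that c(2) by blast
qed

text \<open>The argument works for every \<open>i\<close>.\<close>

theorem mainTheorem2:
  fixes n k i :: nat
  assumes "1 \<le> k" and "2 * k \<le> n" and "i < k"
    and "has_PST (johnson_vertices n k) (johnson_adj n k i)"
  shows "n = 2 * k"
proof (rule ccontr)
  assume "n \<noteq> 2 * k"
  with assms(2) have "2 * k < n" by simp
  obtain A B \<tau> where A: "A \<in> johnson_vertices n k" and B: "B \<in> johnson_vertices n k" and "A \<noteq> B"
    and pst: "cmod (transition_matrix (johnson_vertices n k) (johnson_adj n k i) \<tau> A B) = 1"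
    using assms(4) unfolding has_PST_def by blast
  obtain p where p: "bij_betw p {1..n} {1..n}" "p ` A = A" "p ` B \<noteq> B"
    using obtain_permutation_fixing_moving[OF \<open>2 * k < n\<close> A B \<open>A \<noteq> B\<close>] .
  have "(cmod (transition_matrix (johnson_vertices n k) (johnson_adj n k i) \<tau> A B))\<^sup>2 \<le> 1 / 2"
    using johnson_adj_image[OF p(1)] johnson_adj_commute A B p(2,3)
    by (intro transition_matrix_sq_norm_le_half[OF finite_johnson_vertices _
          bij_betw_image_johnson_vertices[OF p(1)]]) auto
  with pst show False by simp
qed

end
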